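(* Let $p$ be a prime, $n \ge 2$, and $G$ a group of order $p^n$ and exponent $p$. Then $\eta(G) \ge n + p - 1$.
   Context: A cyclic subgroup $C$ of a group $G$ is maximal cyclic if there is no cyclic subgroup $D$ of $G$ with $C < D$. $\eta(G)$ denotes the number of conjugacy classes of maximal cyclic subgroups of $G$. *)

theory Defs
  imports "HOL-Algebra.Algebra"
begin

definition cyclic_subgroup :: "('a, 'b) monoid_scheme \<Rightarrow> 'a set \<Rightarrow> bool" where
  "cyclic_subgroup G C \<longleftrightarrow> (\<exists>g \<in> carrier G. C = generate G {g})"

definition maximal_cyclic_subgroup :: "('a, 'b) monoid_scheme \<Rightarrow> 'a set \<Rightarrow> bool" where
  "maximal_cyclic_subgroup G C \<longleftrightarrow>
     cyclic_subgroup G C \<and> \<not> (\<exists>D. cyclic_subgroup G D \<and> C \<subset> D)"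

definition subgroup_conj_class :: "('a, 'b) monoid_scheme \<Rightarrow> 'a set \<Rightarrow> 'a set set" where
  "subgroup_conj_class G H = {(g <#\<^bsub>G\<^esub> H) #>\<^bsub>G\<^esub> inv\<^bsub>G\<^esub> g | g. g \<in> carrier G}"

definition eta :: "('a, 'b) monoid_scheme \<Rightarrow> nat" where
  "eta G = card (subgroup_conj_class G ` {C. maximal_cyclic_subgroup G C})"

end

theory Submission
  imports Defs
begin

text \<open>In a group of exponent \<open>p\<close> the maximal cyclic subgroups are exactly the subgroups of
  order \<open>p\<close>; they partition the non-identity elements, so there are \<open>1 + p + \<dots> + p^(n-1)\<close> of
  them. The conjugacy class of such a subgroup \<open>H\<close> has size \<open>[G : N(H)]\<close>, and \<open>N(H)\<close> properly
  contains \<open>H\<close> because a \<open>p\<close>-group has a nontrivial centre; so every class has size \<open>p^e\<close>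
  with \<open>e \<le> n - 2\<close>. Writing \<open>1 + p + \<dots> + p^(n-1)\<close> as a sum of such powers needs at least
  as many terms as its base-\<open>p\<close> digit sum with the digit at place \<open>n - 2\<close> left unbounded,
  which is \<open>(n - 2) + (1 + p)\<close>.\<close>

text \<open>\<open>capped_digit_sum p m y\<close> adds the base-\<open>p\<close> digits of \<open>y\<close> at the places below \<open>m\<close> and
  the quotient \<open>y div p^m\<close>; it is the least number of powers \<open>p^e\<close> with \<open>e \<le> m\<close> summing to
  \<open>y\<close>.\<close>
fun capped_digit_sum :: "nat \<Rightarrow> nat \<Rightarrow> nat \<Rightarrow> nat" where
  "capped_digit_sum p 0 y = y"
| "capped_digit_sum p (Suc m) y = y mod p + capped_digit_sum p m (y div p)"

lemma capped_digit_sum_add_le: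
  assumes "0 < p"
  shows "capped_digit_sum p m (t + y) \<le> capped_digit_sum p m y + t"
proof (induction m arbitrary: t y)
  case 0
  then show ?case by simp
next
  case (Suc m)
  define s where "s = t + y mod p"
  have "t + y = s + y div p * p"
    unfolding s_def by simp
  then have mod: "(t + y) mod p = s mod p" and div: "(t + y) div p = s div p + y div p"
    using assms by simp_all
  have "s div p \<le> s div p * p"
    using assms by simp
  then have "s mod p + s div p \<le> s"
    using div_mult_mod_eq[of s p] by linarith
  moreover have
    "capped_digit_sum p (Suc m) (t + y) = s mod p + capped_digit_sum p m (s div p + y div p)"
    by (simp add: mod div)
  ultimately show ?case
    using Suc.IH[of "s div p" "y div p"] s_def by simp
qed

lemma capped_digit_sum_add_power_le:
  assumes "0 < p" "e \<le> m"
  shows "capped_digit_sum p m (p ^ e + y) \<le> capped_digit_sum p m y + 1"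
  using assms(2)
proof (induction m arbitrary: e y)
  case 0
  then show ?case by simp
next
  case (Suc m)
  show ?case
  proof (cases e)
    case 0
    then show ?thesis
      using capped_digit_sum_add_le[OF assms(1), of "Suc m" 1 y] by simp
  next
    case (Suc e')
    have "p ^ e + y = (p ^ e' + y div p) * p + y mod p"
      by (simp add: Suc algebra_simps)
    then have "(p ^ e + y) mod p = y mod p" "(p ^ e + y) div p = p ^ e' + y div p"
      using assms(1) by simp_all
    then show ?thesis
      using Suc.IH[of e' "y div p"] Suc.prems \<open>e = Suc e'\<close> by simp
  qed
qed

lemma capped_digit_sum_sum_powers_le:
  assumes "0 < p" "finite I" "\<forall>i\<in>I. \<exists>e\<le>m. f i = p ^ e"
  shows "capped_digit_sum p m (sum f I) \<le> card I"
  using assms(2,3)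
proof (induction I rule: finite_induct)
  case empty
  then show ?case by (induction m) simp_all
next
  case (insert i I)
  then obtain e where "e \<le> m" "f i = p ^ e" by blast
  then have "capped_digit_sum p m (sum f (insert i I)) \<le> capped_digit_sum p m (sum f I) + 1"
    using insert.hyps capped_digit_sum_add_power_le[OF assms(1)] by simp
  then show ?case
    using insert by simp
qed

lemma capped_digit_sum_geometric:
  assumes "2 \<le> p"
  shows "capped_digit_sum p m (\<Sum>i<m + 2. p ^ i) = m + p + 1"
proof (induction m)
  case 0
  then show ?case by simp
next
  case (Suc m)
  define Y where "Y = (\<Sum>i<m + 2. p ^ i)"
  have "(\<Sum>i<Suc m + 2. p ^ i) = 1 + Y * p"
    unfolding Y_def add_Suc sum.lessThan_Suc_shift
    by (simp add: sum_distrib_left mult.commute del: sum.lessThan_Suc)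
  moreover have "(1 + Y * p) mod p = 1"
    using assms by (subst mod_mult_self1) simp
  moreover have "(1 + Y * p) div p = Y"
    using assms by (subst div_mult_self1) simp_all
  ultimately show ?case
    using Suc.IH[folded Y_def] by simp
qed

lemma power_diff_1_eq_nat:
  fixes p :: nat
  assumes "0 < p"
  shows "p ^ n - 1 = (p - 1) * (\<Sum>i<n. p ^ i)"
proof -
  have "int ((p - 1) * (\<Sum>i<n. p ^ i)) = (int p - 1) * (\<Sum>i<n. int p ^ i)"
    using assms by (simp add: of_nat_diff)
  also have "\<dots> = int p ^ n - 1"
    by (rule power_diff_1_eq[symmetric])
  also have "\<dots> = int (p ^ n - 1)"
    using assms by (simp add: of_nat_diff)
  finally show ?thesis
    by (simp only: of_nat_eq_iff eq_commute)
qed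

definition subgroup_conjugation :: "('a, 'b) monoid_scheme \<Rightarrow> 'a \<Rightarrow> 'a set \<Rightarrow> 'a set" where
  "subgroup_conjugation G = (\<lambda>g. \<lambda>H\<in>{H. subgroup H G}. g <#\<^bsub>G\<^esub> H #>\<^bsub>G\<^esub> inv\<^bsub>G\<^esub> g)"

sublocale group \<subseteq> subgroup_conjugation:
  group_action G "{H. subgroup H G}" "subgroup_conjugation G"
  unfolding subgroup_conjugation_def by (rule action_by_conjugation_on_subgroups_set)

lemma (in group) subgroup_conj_class_eq_orbit:
  assumes "subgroup H G"
  shows "subgroup_conj_class G H = orbit G (subgroup_conjugation G) H"
  using assms unfolding subgroup_conj_class_def orbit_def subgroup_conjugation_def by simp

lemma (in group) subgroup_conjugation_eq_image:
  assumes "g \<in> carrier G" "subgroup H G"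
  shows "subgroup_conjugation G g H = (\<lambda>h. g \<otimes> h \<otimes> inv g) ` H"
  using assms subgroup.subset
  unfolding subgroup_conjugation_def l_coset_def r_coset_def by fastforce

lemma (in group) card_subgroup_conjugation:
  assumes "g \<in> carrier G" "subgroup H G"
  shows "card (subgroup_conjugation G g H) = card H"
proof -
  have "inj_on (\<lambda>h. g \<otimes> h \<otimes> inv g) H"
    using assms subgroup.subset conjugation_is_inj unfolding inj_on_def by blast
  then show ?thesis
    using assms by (simp add: subgroup_conjugation_eq_image card_image)
qed

lemma (in group) finite_subgroups:
  assumes "finite (carrier G)"
  shows "finite {H. subgroup H G}"
proof -
  have "{H. subgroup H G} \<subseteq> Pow (carrier G)"
    using subgroup.subset by blast
  then show ?thesis
    using assms by (simp add: finite_subset)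
qed

lemma (in group_action) orbit_eq_singleton_iff:
  assumes "x \<in> E"
  shows "orbit G \<phi> x = {x} \<longleftrightarrow> (\<forall>g\<in>carrier G. \<phi> g x = x)"
  using orbit_refl[OF assms] unfolding orbit_def by auto

lemma (in group_action) card_eq_sum_card_orbits:
  assumes "finite S" "S \<subseteq> E" "\<And>g x. g \<in> carrier G \<Longrightarrow> x \<in> S \<Longrightarrow> \<phi> g x \<in> S"
  shows "card S = (\<Sum>B\<in>orbit G \<phi> ` S. card B)"
proof -
  have "orbit G \<phi> x \<subseteq> S" "x \<in> orbit G \<phi> x" if "x \<in> S" for x
    using assms(2,3) orbit_refl that unfolding orbit_def by auto
  then have union: "\<Union>(orbit G \<phi> ` S) = S"
    by blast
  have "orbit G \<phi> ` S \<subseteq> orbits G E \<phi>"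
    using assms(2) unfolding orbits_def by blast
  then have "pairwise disjnt (orbit G \<phi> ` S)"
    using disjoint_union unfolding pairwise_def disjnt_def by (meson subsetD)
  moreover have "finite B" if "B \<in> orbit G \<phi> ` S" for B
    using finite_subset[OF Union_upper[OF that]] union assms(1) by simp
  ultimately show ?thesis
    using card_Union_disjoint[of "orbit G \<phi> ` S"] union by simp
qed

lemma (in group_action) card_fixed_points_mod:
  assumes p: "Factorial_Ring.prime p" and order: "order G = p ^ n" and fin: "finite E"
  shows "card {x\<in>E. \<forall>g\<in>carrier G. \<phi> g x = x} mod p = card E mod p"
proof -
  define Fix where "Fix = {x\<in>E. \<forall>g\<in>carrier G. \<phi> g x = x}"
  define Singletons where "Singletons = {B\<in>orbit G \<phi> ` E. card B = 1}"
  have "Singletons = (\<lambda>x. {x}) ` Fix"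
  proof
    show "Singletons \<subseteq> (\<lambda>x. {x}) ` Fix"
    proof
      fix B assume "B \<in> Singletons"
      then obtain x where x: "x \<in> E" "B = orbit G \<phi> x" "card B = 1"
        unfolding Singletons_def by blast
      then have "B = {x}"
        using orbit_refl[OF x(1)] by (metis card_1_singletonE singletonD)
      then show "B \<in> (\<lambda>x. {x}) ` Fix"
        using x orbit_eq_singleton_iff unfolding Fix_def by auto
    qed
    show "(\<lambda>x. {x}) ` Fix \<subseteq> Singletons"
      using orbit_eq_singleton_iff unfolding Fix_def Singletons_def by force
  qed
  then have card_Singletons: "card Singletons = card Fix"
    by (simp add: card_image)
  have "p dvd card B" if B: "B \<in> orbit G \<phi> ` E - Singletons" for B
  proof -
    obtain x where "x \<in> E" "B = orbit G \<phi> x"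
      using B by blast
    then have "p ^ n = card B * card (stabilizer G \<phi> x)"
      using orbit_stabilizer_theorem order by simp
    then have "card B dvd p ^ n"
      by (rule dvdI)
    then obtain i where "card B = p ^ i"
      using divides_primepow_nat[OF p] by blast
    moreover have "card B \<noteq> 1"
      using B unfolding Singletons_def by blast
    ultimately show ?thesis
      by (cases i) simp_all
  qed
  then have dvd: "p dvd (\<Sum>B\<in>orbit G \<phi> ` E - Singletons. card B)"
    by (rule dvd_sum)
  have "card E = (\<Sum>B\<in>orbit G \<phi> ` E. card B)"
    using fin element_image by (intro card_eq_sum_card_orbits) auto
  also have "\<dots> = (\<Sum>B\<in>Singletons. card B) + (\<Sum>B\<in>orbit G \<phi> ` E - Singletons. card B)"
    using sum.subset_diff[of Singletons "orbit G \<phi> ` E" card] fin unfolding Singletons_def by auto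
  also have "(\<Sum>B\<in>Singletons. card B) = card Fix"
    using card_Singletons by (simp add: Singletons_def)
  finally show ?thesis
    using dvd unfolding Fix_def by (auto elim!: dvdE)
qed

lemma (in group) prime_power_order_nontrivial_center:
  assumes p: "Factorial_Ring.prime p" and order: "order G = p ^ n" and "0 < n"
  obtains z where "z \<in> carrier G" "z \<noteq> \<one>" "\<And>g. g \<in> carrier G \<Longrightarrow> g \<otimes> z = z \<otimes> g"
proof -
  interpret conjugation: group_action G "carrier G" "\<lambda>g. \<lambda>h\<in>carrier G. g \<otimes> h \<otimes> inv g"
    by (rule action_by_conjugation)
  define Z where "Z = {x\<in>carrier G. \<forall>g\<in>carrier G. (\<lambda>h\<in>carrier G. g \<otimes> h \<otimes> inv g) x = x}"
  have "0 < order G"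
    using order prime_gt_0_nat[OF p] by simp
  then have fin: "finite (carrier G)"
    by (simp add: order_gt_0_iff_finite)
  have "card Z mod p = card (carrier G) mod p"
    unfolding Z_def using conjugation.card_fixed_points_mod[OF p order fin] .
  also have "\<dots> = 0"
    using order \<open>0 < n\<close> unfolding order_def by simp
  finally have "p dvd card Z"
    by (simp add: dvd_eq_mod_eq_0)
  moreover have "\<one> \<in> Z" "finite Z"
    using fin unfolding Z_def by simp_all
  ultimately have "p \<le> card Z"
    by (intro dvd_imp_le) (auto simp: card_gt_0_iff)
  then have "Z \<noteq> {\<one>}"
    using prime_gt_1_nat[OF p] by auto
  with \<open>\<one> \<in> Z\<close> obtain z where z: "z \<in> Z" "z \<noteq> \<one>"
    by blast
  have "g \<otimes> z = z \<otimes> g" if g: "g \<in> carrier G" for g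
  proof -
    have "z \<in> carrier G" "g \<otimes> z \<otimes> inv g = z"
      using z g unfolding Z_def by auto
    then have "z \<otimes> g = g \<otimes> z \<otimes> inv g \<otimes> g"
      by simp
    also have "\<dots> = g \<otimes> z"
      using g \<open>z \<in> carrier G\<close> by (simp add: m_assoc)
    finally show ?thesis
      by simp
  qed
  then show ?thesis
    using that z unfolding Z_def by blast
qed

locale prime_exponent_group = group G for G (structure) +
  fixes p :: nat
  assumes prime_exponent: "Factorial_Ring.prime p"
    and pow_exponent: "x \<in> carrier G \<Longrightarrow> x [^] p = \<one>"
begin

definition order_p_subgroups :: "'a set set" where
  "order_p_subgroups = {H. subgroup H G \<and> card H = p}"

lemma ord_eq_exponent:
  assumes "x \<in> carrier G" "x \<noteq> \<one>"
  shows "ord x = p"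
proof -
  have "ord x dvd p"
    using assms(1) pow_exponent pow_eq_id by blast
  moreover have "ord x \<noteq> 1"
    using assms ord_eq_1 by simp
  ultimately show ?thesis
    using prime_exponent unfolding prime_nat_iff by blast
qed

lemma card_generate_eq_exponent:
  assumes "x \<in> carrier G" "x \<noteq> \<one>"
  shows "card (generate G {x}) = p"
  using assms generate_pow_card ord_eq_exponent by simp

lemma card_generate_le_exponent:
  assumes "x \<in> carrier G"
  shows "card (generate G {x}) \<le> p"
  using assms card_generate_eq_exponent generate_one prime_gt_0_nat[OF prime_exponent]
  by (cases "x = \<one>") simp_all

lemma finite_generate_singleton:
  assumes "x \<in> carrier G"
  shows "finite (generate G {x})"
  using assms card_generate_eq_exponent generate_one prime_gt_0_nat[OF prime_exponent]
  by (cases "x = \<one>") (simp_all add: card_ge_0_finite)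

lemma generate_eq_order_p_subgroup:
  assumes "H \<in> order_p_subgroups" "x \<in> H" "x \<noteq> \<one>"
  shows "generate G {x} = H"
proof (rule card_subset_eq)
  have H: "subgroup H G" "card H = p"
    using assms(1) unfolding order_p_subgroups_def by simp_all
  then show "finite H"
    using prime_gt_0_nat[OF prime_exponent] card_ge_0_finite by blast
  show "generate G {x} \<subseteq> H"
    using H(1) assms(2) generate_subgroup_incl by blast
  show "card (generate G {x}) = card H"
    using card_generate_eq_exponent[OF subgroup.mem_carrier[OF H(1) assms(2)] assms(3)] H(2)
    by simp
qed

lemma order_p_subgroups_eq:
  assumes "H \<in> order_p_subgroups" "K \<in> order_p_subgroups" "x \<in> H" "x \<in> K" "x \<noteq> \<one>"
  shows "H = K"
  using generate_eq_order_p_subgroup[of H x] generate_eq_order_p_subgroup[of K x] assms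
  by simp

lemma finite_order_p_subgroups:
  assumes "finite (carrier G)"
  shows "finite order_p_subgroups"
  using finite_subgroups[OF assms] unfolding order_p_subgroups_def by (simp add: finite_subset)

lemma conjugate_order_p_subgroup:
  assumes "g \<in> carrier G" "H \<in> order_p_subgroups"
  shows "subgroup_conjugation G g H \<in> order_p_subgroups"
  using assms subgroup_conjugation.element_image[of g H] card_subgroup_conjugation[of g H]
  unfolding order_p_subgroups_def by auto

lemma maximal_cyclic_subgroup_iff:
  assumes "carrier G \<noteq> {\<one>}"
  shows "maximal_cyclic_subgroup G C \<longleftrightarrow> C \<in> order_p_subgroups"
proof
  assume maximal: "maximal_cyclic_subgroup G C"
  then obtain g where g: "g \<in> carrier G" "C = generate G {g}"
    unfolding maximal_cyclic_subgroup_def cyclic_subgroup_def by blast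
  obtain x where x: "x \<in> carrier G" "x \<noteq> \<one>"
    using assms by blast
  have "g \<noteq> \<one>"
  proof
    assume "g = \<one>"
    then have "C = {\<one>}"
      using g generate_one by simp
    moreover have "\<one> \<in> generate G {x}" "x \<in> generate G {x}"
      by (auto intro: generate.one generate.incl)
    ultimately have "C \<subset> generate G {x}"
      using x(2) by blast
    moreover have "cyclic_subgroup G (generate G {x})"
      using x unfolding cyclic_subgroup_def by blast
    ultimately show False
      using maximal unfolding maximal_cyclic_subgroup_def by blast
  qed
  then show "C \<in> order_p_subgroups"
    using g card_generate_eq_exponent generate_is_subgroup unfolding order_p_subgroups_def by simp
next
  assume C: "C \<in> order_p_subgroups"
  then have "\<not> C \<subseteq> {\<one>}"
    using prime_gt_1_nat[OF prime_exponent] card_mono[of "{\<one>}" C]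
    unfolding order_p_subgroups_def by auto
  then obtain x where x: "x \<in> C" "x \<noteq> \<one>"
    by blast
  have "\<not> C \<subset> D" if D: "cyclic_subgroup G D" for D
  proof
    assume "C \<subset> D"
    obtain y where y: "y \<in> carrier G" "D = generate G {y}"
      using D unfolding cyclic_subgroup_def by blast
    then have "card C < card D"
      using psubset_card_mono[OF _ \<open>C \<subset> D\<close>] finite_generate_singleton by simp
    moreover have "card D \<le> p"
      using y card_generate_le_exponent by simp
    ultimately show False
      using C unfolding order_p_subgroups_def by simp
  qed
  moreover have "cyclic_subgroup G C"
    using generate_eq_order_p_subgroup[OF C x] subgroup.mem_carrier[of C G x] C x
    unfolding cyclic_subgroup_def order_p_subgroups_def by blast
  ultimately show "maximal_cyclic_subgroup G C"
    unfolding maximal_cyclic_subgroup_def by blast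
qed

lemma eta_eq_card_conj_classes:
  assumes "carrier G \<noteq> {\<one>}"
  shows "eta G = card (subgroup_conj_class G ` order_p_subgroups)"
proof -
  have "{C. maximal_cyclic_subgroup G C} = order_p_subgroups"
    using maximal_cyclic_subgroup_iff[OF assms] by blast
  then show ?thesis
    unfolding eta_def by simp
qed

text \<open>Every non-identity element lies in exactly one subgroup of order \<open>p\<close>, namely the one it
  generates, so the sets \<open>H - {\<one>}\<close> partition \<open>carrier G - {\<one>}\<close> into blocks of size \<open>p - 1\<close>.\<close>
lemma card_order_p_subgroups:
  assumes order: "order G = p ^ n"
  shows "card order_p_subgroups = (\<Sum>i<n. p ^ i)"
proof -
  define punctured where "punctured H = H - {\<one>}" for H
  have p: "0 < p - 1"
    using prime_gt_1_nat[OF prime_exponent] by simp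
  have "0 < order G"
    using order prime_gt_0_nat[OF prime_exponent] by simp
  then have finite_G: "finite (carrier G)"
    by (simp add: order_gt_0_iff_finite)
  have "inj_on punctured order_p_subgroups"
  proof (rule inj_onI)
    fix H K assume "H \<in> order_p_subgroups" "K \<in> order_p_subgroups" "punctured H = punctured K"
    then show "H = K"
      unfolding order_p_subgroups_def punctured_def using subgroup.one_closed
      by (metis insert_Diff mem_Collect_eq)
  qed
  then have "card (punctured ` order_p_subgroups) = card order_p_subgroups"
    by (rule card_image)
  moreover have union: "\<Union>(punctured ` order_p_subgroups) = carrier G - {\<one>}"
  proof
    show "\<Union>(punctured ` order_p_subgroups) \<subseteq> carrier G - {\<one>}"
      unfolding order_p_subgroups_def punctured_def using subgroup.subset by blast
    show "carrier G - {\<one>} \<subseteq> \<Union>(punctured ` order_p_subgroups)"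
    proof
      fix x assume x: "x \<in> carrier G - {\<one>}"
      then have "generate G {x} \<in> order_p_subgroups"
        unfolding order_p_subgroups_def
        using generate_is_subgroup card_generate_eq_exponent by simp
      moreover have "x \<in> punctured (generate G {x})"
        unfolding punctured_def using x generate.incl[of x "{x}" G] by blast
      ultimately show "x \<in> \<Union>(punctured ` order_p_subgroups)"
        by blast
    qed
  qed
  moreover have "(p - 1) * card (punctured ` order_p_subgroups) =
      card (\<Union>(punctured ` order_p_subgroups))"
  proof (rule card_partition)
    show "finite (punctured ` order_p_subgroups)"
      using finite_order_p_subgroups[OF finite_G] by simp
    show "finite (\<Union>(punctured ` order_p_subgroups))"
      using finite_G union by simp
    show "card B = p - 1" if "B \<in> punctured ` order_p_subgroups" for B
      using that unfolding order_p_subgroups_def punctured_def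
      by (auto simp: card_Diff_singleton subgroup.one_closed)
    show "B \<inter> B' = {}"
      if "B \<in> punctured ` order_p_subgroups" "B' \<in> punctured ` order_p_subgroups" "B \<noteq> B'"
      for B B'
      using that order_p_subgroups_eq unfolding punctured_def by blast
  qed
  ultimately have "(p - 1) * card order_p_subgroups = p ^ n - 1"
    using finite_G order unfolding order_def by simp
  then show ?thesis
    using power_diff_1_eq_nat[of p n] p by simp
qed

lemma card_order_p_subgroups_eq_sum_conj_classes:
  assumes "finite (carrier G)"
  shows "card order_p_subgroups = (\<Sum>B\<in>subgroup_conj_class G ` order_p_subgroups. card B)"
proof -
  let ?orbits = "orbit G (subgroup_conjugation G) ` order_p_subgroups"
  have "subgroup_conj_class G ` order_p_subgroups = ?orbits"
    using subgroup_conj_class_eq_orbit unfolding order_p_subgroups_def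
    by (intro image_cong) simp_all
  moreover have "card order_p_subgroups = (\<Sum>B\<in>?orbits. card B)"
    using finite_order_p_subgroups[OF assms] conjugate_order_p_subgroup
    by (intro subgroup_conjugation.card_eq_sum_card_orbits) (auto simp: order_p_subgroups_def)
  ultimately show ?thesis
    by simp
qed

text \<open>Take a central \<open>z \<noteq> \<one>\<close>. If \<open>z \<notin> H\<close>, then \<open>z\<close> normalises \<open>H\<close>. If \<open>z \<in> H\<close>, then
  every conjugate of \<open>H\<close> is a subgroup of order \<open>p\<close> containing \<open>z\<close>, hence equals \<open>H\<close>, and any
  element outside the proper subgroup \<open>H\<close> normalises it.\<close>
lemma order_p_subgroup_psubset_stabilizer:
  assumes order: "order G = p ^ n" and "2 \<le> n" and H: "H \<in> order_p_subgroups"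
  shows "H \<subset> stabilizer G (subgroup_conjugation G) H"
proof -
  let ?St = "stabilizer G (subgroup_conjugation G) H"
  have H_subgroup: "subgroup H G" and "card H = p"
    using H unfolding order_p_subgroups_def by simp_all
  then have H_carrier: "H \<subseteq> carrier G"
    by (simp add: subgroup.subset)
  have "H \<subseteq> ?St"
  proof
    fix h assume h: "h \<in> H"
    then have h_carrier: "h \<in> carrier G"
      using H_carrier by blast
    have "h <# H #> inv h = H"
      using coset_join3[OF h_carrier H_subgroup h]
        coset_join2[OF inv_closed[OF h_carrier] H_subgroup subgroup.m_inv_closed[OF H_subgroup h]]
      by simp
    then show "h \<in> ?St"
      using h_carrier H_subgroup unfolding stabilizer_def subgroup_conjugation_def by simp
  qed
  obtain z where z: "z \<in> carrier G" "z \<noteq> \<one>" "\<And>g. g \<in> carrier G \<Longrightarrow> g \<otimes> z = z \<otimes> g"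
    using prime_power_order_nontrivial_center[OF prime_exponent order] \<open>2 \<le> n\<close> by auto
  have "\<exists>y\<in>?St. y \<notin> H"
  proof (cases "z \<in> H")
    case False
    have "z \<otimes> h \<otimes> inv z = h" if "h \<in> H" for h
    proof -
      have h: "h \<in> carrier G"
        using that H_carrier by blast
      then have "z \<otimes> h \<otimes> inv z = h \<otimes> z \<otimes> inv z"
        using z(3) by simp
      also have "\<dots> = h"
        using h z(1) by (simp add: m_assoc)
      finally show ?thesis .
    qed
    then have "subgroup_conjugation G z H = H"
      using subgroup_conjugation_eq_image[OF z(1) H_subgroup] by simp
    then show ?thesis
      using z(1) False unfolding stabilizer_def by blast
  next
    case True
    have "p ^ 1 < p ^ n"
      using prime_gt_1_nat[OF prime_exponent] \<open>2 \<le> n\<close> by (intro power_strict_increasing) auto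
    then have "H \<noteq> carrier G"
      using \<open>card H = p\<close> order unfolding order_def by auto
    then obtain y where y: "y \<in> carrier G" "y \<notin> H"
      using H_carrier by blast
    define K where "K = subgroup_conjugation G y H"
    have "y \<otimes> z \<otimes> inv y = z"
      using z(3)[OF y(1)] y(1) z(1) by (simp add: m_assoc)
    then have "z \<in> K"
      using True subgroup_conjugation_eq_image[OF y(1) H_subgroup]
      unfolding K_def by (metis image_eqI)
    then have "K = H"
      using order_p_subgroups_eq[of K H z] conjugate_order_p_subgroup[OF y(1) H] H True z(2)
      unfolding K_def by simp
    then show ?thesis
      using y unfolding K_def stabilizer_def by blast
  qed
  then show ?thesis
    using \<open>H \<subseteq> ?St\<close> by blast
qed

lemma card_conj_class_order_p_subgroup:
  assumes order: "order G = p ^ n" and "2 \<le> n" and H: "H \<in> order_p_subgroups"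
  shows "\<exists>e\<le>n - 2. card (subgroup_conj_class G H) = p ^ e"
proof -
  let ?St = "stabilizer G (subgroup_conjugation G) H"
  let ?O = "orbit G (subgroup_conjugation G) H"
  have p: "1 < p"
    using prime_gt_1_nat[OF prime_exponent] .
  have H_subgroup: "subgroup H G"
    using H unfolding order_p_subgroups_def by simp
  have product: "p ^ n = card ?O * card ?St"
    using subgroup_conjugation.orbit_stabilizer_theorem H_subgroup order by simp
  obtain i where i: "card ?St = p ^ i"
    using product divides_primepow_nat[OF prime_exponent] by (metis dvd_triv_right)
  obtain e where e: "card ?O = p ^ e"
    using product divides_primepow_nat[OF prime_exponent] by (metis dvd_triv_left)
  have "finite ?St"
    using i p by (intro card_ge_0_finite) simp
  then have "p < card ?St"
    using psubset_card_mono[OF _ order_p_subgroup_psubset_stabilizer[OF assms]] H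
    unfolding order_p_subgroups_def by simp
  then have "2 \<le> i"
    using power_less_imp_less_exp[OF p, of 1 i] i by simp
  moreover have "n = e + i"
    using product i e p by (simp add: power_add[symmetric])
  ultimately show ?thesis
    using e subgroup_conj_class_eq_orbit[OF H_subgroup] by (intro exI[of _ e]) simp
qed

end

theorem corollary4p5:
  fixes G (structure) and p n :: nat
  assumes "group G"
    and "Factorial_Ring.prime p"
    and "n \<ge> 2"
    and "order G = p ^ n"
    and "\<forall>x \<in> carrier G. x [^] p = \<one>"
  shows "eta G \<ge> n + p - 1"
proof -
  interpret prime_exponent_group G p
    using assms by (simp add: prime_exponent_group_def prime_exponent_group_axioms_def)
  let ?classes = "subgroup_conj_class G ` order_p_subgroups"
  have p: "2 \<le> p"
    using prime_ge_2_nat[OF assms(2)] .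
  have "1 < order G"
    using one_less_power[of p n] assms(3,4) p by simp
  then have finite_G: "finite (carrier G)" and "carrier G \<noteq> {\<one>}"
    using order_gt_0_iff_finite unfolding order_def by auto
  obtain m where n: "n = m + 2"
    using assms(3) by (metis add.commute le_Suc_ex)
  have "capped_digit_sum p m (\<Sum>B\<in>?classes. card B) \<le> card ?classes"
    using card_conj_class_order_p_subgroup[OF assms(4,3)] finite_order_p_subgroups[OF finite_G]
      p n
    by (intro capped_digit_sum_sum_powers_le) auto
  moreover have "(\<Sum>B\<in>?classes. card B) = (\<Sum>i<m + 2. p ^ i)"
    using card_order_p_subgroups_eq_sum_conj_classes[OF finite_G]
      card_order_p_subgroups[OF assms(4)] n
    by simp
  ultimately show ?thesis
    using capped_digit_sum_geometric[OF p, of m] eta_eq_card_conj_classes[OF \<open>carrier G \<noteq> {\<one>}\<close>] n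
    by simp
qed

end
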